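(* Let $(E,\tau)$ be a convex space. Then $(E,\tau)$ is uniquely generated if and only if for all $X,Y\subseteq E$, $\tau(X)=\tau(Y)$ implies $\tau(X\cap Y)=\tau(X)=\tau(Y)$.
   Context: $E$ is a finite set and $\tau:2^E\to 2^E$. $(E,\tau)$ is a convex space if (C1) $X\subseteq\tau(X)$ for all $X\subseteq E$, and (convexity) for all $X\subseteq Y\subseteq Z\subseteq E$ with $\tau(X)=\tau(Z)$ we have $\tau(Y)=\tau(X)$. For $X\subseteq E$, a generator of $X$ is any $B\subseteq E$ with $\tau(B)=\tau(X)$; a basis of $X$ is an inclusion-minimal generator of $X$. The space is uniquely generated if every $X\subseteq E$ has exactly one basis. *)

theory Defs
  imports Main
begin

definition convex_space :: "'a set \<Rightarrow> ('a set \<Rightarrow> 'a set) \<Rightarrow> bool" where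
  "convex_space E \<tau> \<longleftrightarrow> finite E \<and> (\<forall>X. X \<subseteq> E \<longrightarrow> \<tau> X \<subseteq> E) \<and>
     (\<forall>X. X \<subseteq> E \<longrightarrow> X \<subseteq> \<tau> X) \<and>
     (\<forall>X Y Z. X \<subseteq> Y \<and> Y \<subseteq> Z \<and> Z \<subseteq> E \<and> \<tau> X = \<tau> Z \<longrightarrow> \<tau> Y = \<tau> X)"

definition is_generator :: "'a set \<Rightarrow> ('a set \<Rightarrow> 'a set) \<Rightarrow> 'a set \<Rightarrow> 'a set \<Rightarrow> bool" where
  "is_generator E \<tau> X B \<longleftrightarrow> B \<subseteq> E \<and> \<tau> B = \<tau> X"

definition is_basis :: "'a set \<Rightarrow> ('a set \<Rightarrow> 'a set) \<Rightarrow> 'a set \<Rightarrow> 'a set \<Rightarrow> bool" where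
  "is_basis E \<tau> X B \<longleftrightarrow> is_generator E \<tau> X B \<and>
     (\<forall>C. C \<subseteq> B \<and> is_generator E \<tau> X C \<longrightarrow> C = B)"

definition uniquely_generated :: "'a set \<Rightarrow> ('a set \<Rightarrow> 'a set) \<Rightarrow> bool" where
  "uniquely_generated E \<tau> \<longleftrightarrow> (\<forall>X. X \<subseteq> E \<longrightarrow> (\<exists>!B. is_basis E \<tau> X B))"

end

theory Submission
  imports Defs
begin

text \<open>Since E is finite, every generator contains a basis. If generators of equal closure are
  closed under intersection, two bases B, C of X yield the generator B \<inter> C, and minimality forces
  B = B \<inter> C = C. Conversely, if bases are unique, the bases
  contained in X and in Y coincide, so X \<inter> Y lies between that basis and X, and convexity gives
  \<tau>(X \<inter> Y) = \<tau> X.\<close>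

lemma convex_space_finite: "convex_space E \<tau> \<Longrightarrow> finite E"
  by (simp add: convex_space_def)

lemma convex_spaceD_convex:
  assumes "convex_space E \<tau>" "X \<subseteq> Y" "Y \<subseteq> Z" "Z \<subseteq> E" "\<tau> X = \<tau> Z"
  shows "\<tau> Y = \<tau> X"
  using assms(1) unfolding convex_space_def
  by (elim conjE allE[where x = X] allE[where x = Y] allE[where x = Z] impE) (use assms(2-5) in simp_all)

lemma is_basisD:
  assumes "is_basis E \<tau> X B"
  shows "B \<subseteq> E" "\<tau> B = \<tau> X"
  using conjunct1[OF assms[unfolded is_basis_def]] unfolding is_generator_def by simp_all

lemma basis_within_generator:
  assumes "finite E" "is_generator E \<tau> X G"
  shows "\<exists>B\<subseteq>G. is_basis E \<tau> X B"
proof -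
  let ?gens = "{C. C \<subseteq> G \<and> \<tau> C = \<tau> X}"
  have G: "G \<subseteq> E" "\<tau> G = \<tau> X"
    using assms(2) by (simp_all add: is_generator_def)
  have "finite G"
    using G(1) assms(1) by (rule finite_subset)
  then have "finite ?gens"
    by (simp add: finite_subset[of _ "Pow G"] subset_eq)
  moreover have "G \<in> ?gens"
    using G by simp
  ultimately obtain B where B: "B \<in> ?gens" and min: "\<forall>C\<in>?gens. C \<subseteq> B \<longrightarrow> B = C"
    by (meson finite_has_minimal2)
  have "is_basis E \<tau> X B"
    unfolding is_basis_def is_generator_def
  proof (intro conjI allI impI)
    show "B \<subseteq> E" "\<tau> B = \<tau> X"
      using B G by auto
    fix C assume "C \<subseteq> B \<and> C \<subseteq> E \<and> \<tau> C = \<tau> X"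
    then show "C = B"
      using min B by auto
  qed
  with B show ?thesis by blast
qed

lemma basis_eqI:
  assumes "is_basis E \<tau> X B" "is_basis E \<tau> X C" "\<tau> (B \<inter> C) = \<tau> X"
  shows "B = C"
proof -
  have "B \<inter> C = B" "B \<inter> C = C"
    using assms unfolding is_basis_def is_generator_def by (meson Int_lower1 Int_lower2 le_infI1)+
  then show ?thesis by simp
qed

lemma uniquely_generated_closure_Int:
  assumes "convex_space E \<tau>" "uniquely_generated E \<tau>"
    and "X \<subseteq> E" "Y \<subseteq> E" "\<tau> X = \<tau> Y"
  shows "\<tau> (X \<inter> Y) = \<tau> X"
proof -
  obtain B1 B2 where B1: "B1 \<subseteq> X" "is_basis E \<tau> X B1" and B2: "B2 \<subseteq> Y" "is_basis E \<tau> X B2"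
    using basis_within_generator[OF convex_space_finite[OF assms(1)]] assms(3-5)
    by (metis is_generator_def)
  have "\<exists>!B. is_basis E \<tau> X B"
    using assms(2,3) by (simp add: uniquely_generated_def)
  then have "B1 = B2"
    using B1(2) B2(2) by blast
  then have "B1 \<subseteq> X \<inter> Y"
    using B1(1) B2(1) by blast
  moreover have "\<tau> B1 = \<tau> X"
    using B1(2) by (rule is_basisD)
  ultimately show ?thesis
    using convex_spaceD_convex[OF assms(1) _ Int_lower1 assms(3)] by metis
qed

lemma uniquely_generatedI_closure_Int:
  assumes "finite E"
    and Int: "\<And>X Y. X \<subseteq> E \<Longrightarrow> Y \<subseteq> E \<Longrightarrow> \<tau> X = \<tau> Y \<Longrightarrow> \<tau> (X \<inter> Y) = \<tau> X"
  shows "uniquely_generated E \<tau>"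
  unfolding uniquely_generated_def
proof (intro allI impI)
  fix X assume "X \<subseteq> E"
  then obtain B where B: "is_basis E \<tau> X B"
    using basis_within_generator[OF assms(1)] by (metis is_generator_def)
  have "C = B" if C: "is_basis E \<tau> X C" for C
  proof (rule basis_eqI[OF C B])
    show "\<tau> (C \<inter> B) = \<tau> X"
      using Int[of C B] is_basisD[OF B] is_basisD[OF C] by argo
  qed
  with B show "\<exists>!B. is_basis E \<tau> X B" by blast
qed

theorem mainTheorem8:
  assumes "convex_space E \<tau>"
  shows "uniquely_generated E \<tau> \<longleftrightarrow>
    (\<forall>X Y. X \<subseteq> E \<and> Y \<subseteq> E \<and> \<tau> X = \<tau> Y \<longrightarrow> \<tau> (X \<inter> Y) = \<tau> X \<and> \<tau> X = \<tau> Y)"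
proof
  assume "uniquely_generated E \<tau>"
  then show "\<forall>X Y. X \<subseteq> E \<and> Y \<subseteq> E \<and> \<tau> X = \<tau> Y \<longrightarrow> \<tau> (X \<inter> Y) = \<tau> X \<and> \<tau> X = \<tau> Y"
    using uniquely_generated_closure_Int[OF assms] by blast
next
  assume "\<forall>X Y. X \<subseteq> E \<and> Y \<subseteq> E \<and> \<tau> X = \<tau> Y \<longrightarrow> \<tau> (X \<inter> Y) = \<tau> X \<and> \<tau> X = \<tau> Y"
  then show "uniquely_generated E \<tau>"
    using convex_space_finite[OF assms] by (intro uniquely_generatedI_closure_Int) auto
qed

end
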